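(* Let $s \ge p \ge 2$ be real numbers and let $h:\mathbb{R}^d\to\mathbb{R}$, $h(z) = \|z\|_p^s$. Then for all $z_a, z_b \in \mathbb{R}^d$, \[ \omega_h(z_a,z_b) + \omega_h(z_b,z_a) \;\ge\; \frac{4s}{2^s}\,\|z_a - z_b\|_p^s , \] equivalently $\langle \nabla h(z_a) - \nabla h(z_b),\, z_a - z_b\rangle \ge \frac{4s}{2^s}\|z_a-z_b\|_p^s$.
   Context: $\|z\|_p = (\sum_{i=1}^d |z_i|^p)^{1/p}$. For a differentiable function $h$, the Bregman divergence is $\omega_h(x,y) = h(x) - h(y) - \langle \nabla h(y), x - y\rangle$. *)

theory Defs
  imports "HOL-Analysis.Analysis"
begin

(* p-norm on R^d, with R^d rendered as real^'d (d = CARD('d)) *)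
definition pnorm :: "real \<Rightarrow> real ^ 'd \<Rightarrow> real" where
  "pnorm p z = (\<Sum>i\<in>UNIV. \<bar>z $ i\<bar> powr p) powr (1 / p)"

definition grad :: "(real ^ 'd \<Rightarrow> real) \<Rightarrow> real ^ 'd \<Rightarrow> real ^ 'd" where
  "grad h y = (SOME g. (h has_derivative (\<lambda>v. g \<bullet> v)) (at y))"

definition bregman :: "(real ^ 'd \<Rightarrow> real) \<Rightarrow> real ^ 'd \<Rightarrow> real ^ 'd \<Rightarrow> real" where
  "bregman h x y = h x - h y - grad h y \<bullet> (x - y)"

end

theory Submission
  imports Defs
begin

(* Let Phi(z) = (sgn z_i |z_i|^(p-1))_i (duality_map p below) be the gradient of ||z||_p^p / p.
   The gradient of h is s ||z||_p^(s-p) Phi(z), so the symmetrised Bregman divergence is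
   <grad h(a) - grad h(b), a - b> = s (A^(s-p) <Phi a, a - b> - B^(s-p) <Phi b, a - b>),
   where A = ||a||_p, B = ||b||_p, R = ||a - b||_p.  Coordinatewise,
   (sgn x |x|^(p-1) - sgn y |y|^(p-1)) (x - y) >= 2^(2-p) |x - y|^p, hence
   <Phi a - Phi b, a - b> >= 2^(2-p) R^p, and Hoelder's inequality bounds each inner product
   separately.  What remains is an inequality between real numbers, proved by cases; the one
   delicate case (B < R/2 and <Phi b, a - b> < 0) interpolates between A^(s-p) and B^(s-p)
   and rests on the convexity of x ln x. *)

definition signed_powr :: "real \<Rightarrow> real \<Rightarrow> real" where
  "signed_powr r x = sgn x * \<bar>x\<bar> powr r"

lemma signed_powr_mult_self: "signed_powr r x * x = \<bar>x\<bar> powr (r + 1)"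
  by (cases "x = 0") (auto simp: signed_powr_def sgn_if powr_add)

lemma has_real_derivative_abs_powr:
  fixes r x :: real
  assumes "1 < r"
  shows "((\<lambda>y. \<bar>y\<bar> powr r) has_real_derivative r * signed_powr (r - 1) x) (at x)"
proof -
  consider "x > 0" | "x < 0" | "x = 0" by linarith
  then show ?thesis
  proof cases
    case 1
    have "\<forall>\<^sub>F y in nhds x. \<bar>y\<bar> powr r = y powr r"
      using eventually_nhds_in_open[of "{0<..}" x] 1 by (auto elim!: eventually_mono)
    moreover have "((\<lambda>y. y powr r) has_real_derivative r * x powr (r - 1)) (at x)"
      using has_real_derivative_powr[OF 1] .
    ultimately show ?thesis
      using 1 by (subst DERIV_cong_ev[OF refl _ refl]) (auto simp: signed_powr_def)
  next
    case 2
    have "\<forall>\<^sub>F y in nhds x. \<bar>y\<bar> powr r = (- y) powr r"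
      using eventually_nhds_in_open[of "{..<0}" x] 2 by (auto elim!: eventually_mono)
    moreover have "((\<lambda>y. (- y) powr r) has_real_derivative r * (- x) powr (r - 1) * (- 1)) (at x)"
      using 2 by (auto intro!: derivative_eq_intros)
    ultimately show ?thesis
      using 2 by (subst DERIV_cong_ev[OF refl _ refl]) (auto simp: signed_powr_def)
  next
    case 3
    have "((\<lambda>y. \<bar>y\<bar> powr (r - 1)) \<longlongrightarrow> 0) (at 0)"
      by (rule tendsto_zero_powrI) (auto intro!: tendsto_eq_intros simp: assms)
    then have "((\<lambda>y. (\<bar>y\<bar> powr r - \<bar>0\<bar> powr r) / (y - 0)) \<longlongrightarrow> 0) (at 0)"
      by (rule Lim_null_comparison[rotated])
        (use assms in \<open>auto simp: eventually_at_filter powr_diff abs_divide\<close>)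
    then show ?thesis
      using 3 by (simp add: has_field_derivative_iff signed_powr_def)
  qed
qed

lemma add_powr_le_powr_add:
  fixes r y z :: real
  assumes "1 \<le> r" "0 \<le> y" "0 \<le> z"
  shows "y powr r + z powr r \<le> (y + z) powr r"
proof (cases "y + z = 0")
  case True
  then have "y = 0" "z = 0" using assms by auto
  then show ?thesis by simp
next
  case False
  then have pos: "0 < y + z" using assms by auto
  have le_self: "(w / (y + z)) powr r \<le> w / (y + z)" if "0 \<le> w" "w \<le> y + z" for w
    using that pos assms powr_le_one_le[of "w / (y + z)" r]
    by (cases "w = 0") (auto simp: divide_le_eq)
  have "(y powr r + z powr r) / (y + z) powr r = (y / (y + z)) powr r + (z / (y + z)) powr r"
    using assms pos by (simp add: powr_divide add_divide_distrib)
  also have "\<dots> \<le> y / (y + z) + z / (y + z)"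
    using assms by (intro add_mono le_self) auto
  also have "\<dots> = 1" using pos by (simp add: add_divide_distrib[symmetric])
  finally show ?thesis using pos by (simp add: divide_le_eq)
qed

lemma signed_powr_diff_ge:
  fixes r x y :: real
  assumes r: "1 \<le> r" and "y \<le> x"
  shows "2 powr (1 - r) * (x - y) powr r \<le> signed_powr r x - signed_powr r y"
proof -
  have "2 powr (1 - r) \<le> 1" using powr_mono[of "1 - r" 0 2] r by simp
  then have drop_const: "2 powr (1 - r) * (x - y) powr r \<le> (x - y) powr r"
    by (simp add: mult_left_le_one_le)
  consider "0 \<le> y" | "x \<le> 0" | "y < 0" "0 < x" by linarith
  then show ?thesis
  proof cases
    case 1
    have "y powr r + (x - y) powr r \<le> x powr r"
      using add_powr_le_powr_add[OF r 1, of "x - y"] assms by simp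
    then show ?thesis using drop_const 1 assms by (auto simp: signed_powr_def sgn_if)
  next
    case 2
    have "(- y) powr r - (- x) powr r \<ge> (x - y) powr r"
      using add_powr_le_powr_add[OF r, of "- x" "x - y"] assms 2 by simp
    then show ?thesis using drop_const 2 assms by (auto simp: signed_powr_def sgn_if)
  next
    case 3
    have "((x + - y) / 2) powr r \<le> (x powr r + (- y) powr r) / 2"
      using convex_onD[OF powr_convex[OF r], of "1/2" x "- y"] 3
      by (simp add: diff_divide_distrib)
    moreover have "((x - y) / 2) powr r = 2 powr (1 - r) * (x - y) powr r / 2"
      using 3 by (simp add: powr_divide powr_diff)
    ultimately show ?thesis using 3 by (simp add: signed_powr_def)
  qed
qed

lemma signed_powr_strongly_monotone:
  fixes p x y :: real
  assumes p: "2 \<le> p"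
  shows "2 powr (2 - p) * \<bar>x - y\<bar> powr p
    \<le> (signed_powr (p - 1) x - signed_powr (p - 1) y) * (x - y)"
proof -
  have ordered: "2 powr (2 - p) * (x - y) powr p
      \<le> (signed_powr (p - 1) x - signed_powr (p - 1) y) * (x - y)" if "y \<le> x" for x y
  proof -
    have "2 powr (2 - p) * (x - y) powr p = (2 powr (1 - (p - 1)) * (x - y) powr (p - 1)) * (x - y)"
      using that p by (cases "x = y") (auto simp: powr_diff)
    also have "\<dots> \<le> (signed_powr (p - 1) x - signed_powr (p - 1) y) * (x - y)"
      using signed_powr_diff_ge[of "p - 1" y x] that p by (intro mult_right_mono) auto
    finally show ?thesis .
  qed
  show ?thesis
    using ordered[of y x] ordered[of x y] by (cases "y \<le> x") (auto simp: algebra_simps)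
qed

lemma mult_ln_divide_le:
  fixes A B M :: real
  assumes B: "0 < B" and BM: "B < M" and MAB: "2 * M \<le> A + B"
  shows "2 * (M * ln (M / A)) \<le> B * ln (B / A)"
proof -
  define f where "f x = x * ln (x / A)" for x
  have BA: "B < A" using BM MAB by linarith
  have A: "0 < A" using B BA by linarith
  have convex: "convex_on {0<..} f"
  proof (rule convex_on_realI[where f' = "\<lambda>x. ln (x / A) + 1"])
    show "(f has_real_derivative ln (x / A) + 1) (at x)" if "x \<in> {0<..}" for x
      using that A unfolding f_def by (auto intro!: derivative_eq_intros simp: field_simps)
    show "ln (x / A) + 1 \<le> ln (y / A) + 1" if "x \<in> {0<..}" "y \<in> {0<..}" "x \<le> y" for x y
      using that A by (simp add: divide_right_mono)
  qed simp
  define l where "l = (A - M) / (A - B)"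
  have l: "1 / 2 \<le> l" "l \<le> 1"
    using BA BM MAB by (auto simp: l_def field_simps)
  have "l * (A - B) = A - M"
    using BA by (simp add: l_def)
  then have M_eq: "M = (1 - l) * A + l * B"
    by (simp add: algebra_simps)
  have "f M \<le> (1 - l) * f A + l * f B"
    unfolding M_eq using convex_onD[OF convex, of l A B] l A B by (simp add: algebra_simps)
  also have "\<dots> = l * f B" using A by (simp add: f_def)
  also have "\<dots> \<le> f B / 2"
  proof -
    have "f B \<le> 0" using B BA by (simp add: f_def mult_nonneg_nonpos)
    then show ?thesis using mult_right_mono_neg[OF l(1)] by simp
  qed
  finally show ?thesis by (simp add: f_def)
qed

lemma half_le_weighted_geometric_mean:
  fixes A B R l :: real
  assumes B: "0 < B" and BR: "2 * B < R" and RAB: "R \<le> A + B" and BA: "B \<le> A"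
    and l: "1 - l \<le> B / R"
  shows "R / 2 \<le> A powr l * B powr (1 - l)"
proof -
  have R: "0 < R" and A: "0 < A" using B BR BA by linarith+
  have "2 * (R / 2 * ln (R / 2 / A)) \<le> B * ln (B / A)"
    using mult_ln_divide_le[of B "R / 2" A] B BR RAB by simp
  then have "B * (ln A - ln B) \<le> R * (ln A - ln (R / 2))"
    using A B R by (simp add: ln_div ln_mult algebra_simps)
  then have "(B / R) * (ln A - ln B) \<le> ln A - ln (R / 2)"
    using R by (simp add: field_simps)
  moreover have "(1 - l) * (ln A - ln B) \<le> (B / R) * (ln A - ln B)"
    using l A B BA by (intro mult_right_mono) auto
  ultimately have "ln (R / 2) \<le> l * ln A + (1 - l) * ln B"
    by (simp add: algebra_simps)
  also have "\<dots> = ln (A powr l * B powr (1 - l))"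
    using A B by (simp add: ln_mult ln_powr)
  finally show ?thesis using R A B by simp
qed

lemma half_powr_le_convex_combination:
  fixes A B R l q :: real
  assumes q: "0 \<le> q" and B: "0 < B" and BR: "2 * B < R" and RAB: "R \<le> A + B" and BA: "B \<le> A"
    and l: "0 \<le> l" "l \<le> 1" "1 - l \<le> B / R"
  shows "(R / 2) powr q \<le> l * A powr q + (1 - l) * B powr q"
proof -
  have A: "0 < A" using B BA by linarith
  have "(R / 2) powr q \<le> (A powr l * B powr (1 - l)) powr q"
    using half_le_weighted_geometric_mean[OF B BR RAB BA l(3)] q B BR by (intro powr_mono2) auto
  also have "\<dots> = (A powr q) powr l * (B powr q) powr (1 - l)"
    by (simp add: powr_mult powr_powr mult.commute)
  also have "\<dots> \<le> l * A powr q + (1 - l) * B powr q"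
    using Youngs_inequality_0[of l "1 - l" "A powr q" "B powr q"] l A B by simp
  finally show ?thesis .
qed

lemma powr_pred_mult_le:
  fixes p B R :: real
  assumes p: "2 \<le> p" and B: "0 < B" and BR: "2 * B \<le> R"
  shows "B powr (p - 1) * R \<le> 2 powr (2 - p) * R powr p * (B / R)"
proof -
  have R: "0 < R" using B BR by linarith
  have "B powr (p - 1) * R = B powr (p - 2) * (B * R)"
    using B by (simp add: powr_diff power2_eq_square)
  also have "\<dots> \<le> (R / 2) powr (p - 2) * (B * R)"
    using p B R BR by (intro mult_right_mono powr_mono2) auto
  also have "\<dots> = 2 powr (2 - p) * R powr p * (B / R)"
    using R by (simp add: powr_divide powr_diff field_simps power2_eq_square)
  finally show ?thesis .
qed

(* The case of powr_weighted_gap_ge below where B^q (-P0) has to make up for P1 < c;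
   since -P0 <= c B / R, the weight l = P1 / c satisfies 1 - l <= B / R. *)
lemma powr_weighted_gap_ge_interpolation:
  fixes p q A B R P1 P0 :: real
  defines "c \<equiv> 2 powr (2 - p) * R powr p"
  assumes p: "2 \<le> p" and q: "0 \<le> q" and B: "0 < B" and BA: "B \<le> A"
    and BR: "2 * B < R" and RAB: "R \<le> A + B"
    and P1: "0 \<le> P1" "P1 < c" and P0: "- P0 \<le> B powr (p - 1) * R" and gap: "c \<le> P1 - P0"
  shows "c * (R / 2) powr q \<le> A powr q * P1 - B powr q * P0"
proof -
  have c: "0 < c" using B BR by (simp add: c_def)
  define l where "l = P1 / c"
  have l: "0 \<le> l" "l \<le> 1" using P1 c by (auto simp: l_def)
  have "1 - l = (c - P1) / c"
    using c by (simp add: l_def field_simps)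
  also have "\<dots> \<le> - P0 / c"
    using gap c by (intro divide_right_mono) auto
  also have "\<dots> \<le> c * (B / R) / c"
    using P0 powr_pred_mult_le[OF p B, of R] BR c
    by (intro divide_right_mono) (auto simp: c_def)
  also have "\<dots> = B / R" using c by simp
  finally have "(R / 2) powr q \<le> l * A powr q + (1 - l) * B powr q"
    using half_powr_le_convex_combination[OF q B BR RAB BA l] by simp
  then have "c * (R / 2) powr q \<le> A powr q * P1 + B powr q * (c - P1)"
    using c by (simp add: l_def field_simps mult_left_mono)
  also have "\<dots> \<le> A powr q * P1 + B powr q * - P0"
    using gap by (intro add_left_mono mult_left_mono) auto
  finally show ?thesis by simp
qed

(* A, B, R play the roles of ||a||_p, ||b||_p, ||a - b||_p, and P1, P0 those of
   <Phi a, a - b>, <Phi b, a - b>. *)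
lemma powr_weighted_gap_ge:
  fixes p s A B R P1 P0 :: real
  assumes p: "2 \<le> p" and ps: "p \<le> s" and B: "0 \<le> B" and BA: "B \<le> A"
    and R: "0 \<le> R" and RAB: "R \<le> A + B"
    and P1: "0 \<le> P1" and P0: "- P0 \<le> B powr (p - 1) * R"
    and gap: "2 powr (2 - p) * R powr p \<le> P1 - P0"
  shows "2 powr (2 - s) * R powr s \<le> A powr (s - p) * P1 - B powr (s - p) * P0"
proof -
  define q where "q = s - p"
  define c where "c = 2 powr (2 - p) * R powr p"
  have q: "0 \<le> q" using ps by (simp add: q_def)
  have gap': "c \<le> P1 - P0" using gap by (simp add: c_def)
  have below: "c * (R / 2) powr q \<le> X powr q * c" if "R / 2 \<le> X" for X
    using that R q by (subst mult.commute) (intro mult_left_mono powr_mono2; simp add: c_def)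
  have Aq_ge_Bq: "B powr q \<le> A powr q" using B BA q by (intro powr_mono2) auto
  consider "0 \<le> P0" | "P0 < 0" "R / 2 \<le> B" | "P0 < 0" "B < R / 2" "c \<le> P1"
    | "P0 < 0" "B < R / 2" "P1 < c" by linarith
  then have "c * (R / 2) powr q \<le> A powr q * P1 - B powr q * P0"
  proof cases
    case 1
    have "B powr q * P0 \<le> A powr q * P0" using 1 Aq_ge_Bq by (intro mult_right_mono) auto
    moreover have "A powr q * c \<le> A powr q * P1 - A powr q * P0"
      using gap' by (simp add: mult_left_mono flip: right_diff_distrib)
    ultimately show ?thesis using below[of A] RAB BA by linarith
  next
    case 2
    have "B powr q * P1 \<le> A powr q * P1" using P1 Aq_ge_Bq by (intro mult_right_mono) auto
    moreover have "B powr q * c \<le> B powr q * P1 - B powr q * P0"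
      using gap' by (simp add: mult_left_mono flip: right_diff_distrib)
    ultimately show ?thesis using below[of B] 2 by linarith
  next
    case 3
    have "A powr q * c \<le> A powr q * P1" using 3 by (intro mult_left_mono) auto
    moreover have "0 \<le> B powr q * - P0" using 3 by (simp add: mult_nonneg_nonpos)
    ultimately show ?thesis using below[of A] RAB BA by linarith
  next
    case 4
    have "0 < B" using 4 P0 B by (cases "B = 0") auto
    then show ?thesis
      using powr_weighted_gap_ge_interpolation[OF p q _ BA _ RAB P1 _ P0] 4 gap'
      by (simp add: c_def)
  qed
  moreover have "2 powr (2 - s) * R powr s = c * (R / 2) powr q"
    using R p ps by (cases "R = 0")
      (simp_all add: c_def q_def powr_divide powr_diff field_simps flip: powr_add)
  ultimately show ?thesis by (simp add: q_def)
qed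

definition sum_abs_powr :: "real \<Rightarrow> real ^ 'd \<Rightarrow> real" where
  "sum_abs_powr p z = (\<Sum>i\<in>UNIV. \<bar>z $ i\<bar> powr p)"

definition duality_map :: "real \<Rightarrow> real ^ 'd \<Rightarrow> real ^ 'd" where
  "duality_map p z = (\<chi> i. signed_powr (p - 1) (z $ i))"

lemma sum_abs_powr_nonneg: "0 \<le> sum_abs_powr p z"
  by (simp add: sum_abs_powr_def sum_nonneg)

lemma pnorm_nonneg: "0 \<le> pnorm p z"
  by (simp add: pnorm_def)

lemma pnorm_0 [simp]: "pnorm p 0 = 0"
  by (simp add: pnorm_def)

lemma pnorm_powr_self:
  assumes "0 < p"
  shows "pnorm p z powr p = sum_abs_powr p z"
  using assms sum_abs_powr_nonneg[of p z] by (simp add: pnorm_def sum_abs_powr_def powr_powr)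

lemma sum_abs_powr_eq_0_iff:
  assumes "0 < p"
  shows "sum_abs_powr p z = 0 \<longleftrightarrow> z = 0"
proof
  assume "sum_abs_powr p z = 0"
  then have "\<forall>i\<in>UNIV. \<bar>z $ i\<bar> powr p = 0"
    unfolding sum_abs_powr_def by (subst sum_nonneg_eq_0_iff[symmetric]) auto
  then show "z = 0" by (simp add: vec_eq_iff)
qed (simp add: sum_abs_powr_def)

lemma pnorm_pos:
  assumes "0 < p" "z \<noteq> 0"
  shows "0 < pnorm p z"
  using assms sum_abs_powr_eq_0_iff[of p z] sum_abs_powr_nonneg[of p z]
  by (simp add: pnorm_def sum_abs_powr_def)

lemma pnorm_uminus [simp]: "pnorm p (- z) = pnorm p z"
  by (simp add: pnorm_def)

lemma pnorm_minus_commute: "pnorm p (a - b) = pnorm p (b - a)"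
  by (metis minus_diff_eq pnorm_uminus)

lemma duality_map_0 [simp]: "duality_map p 0 = 0"
  by (simp add: duality_map_def signed_powr_def vec_eq_iff)

lemma inner_duality_map_self:
  assumes "0 < p"
  shows "duality_map p z \<bullet> z = pnorm p z powr p"
  using assms
  by (simp add: duality_map_def inner_vec_def signed_powr_mult_self pnorm_powr_self sum_abs_powr_def)

lemma inner_duality_map_le:
  fixes x y :: "real ^ 'd"
  assumes p: "1 < p"
  shows "duality_map p x \<bullet> y \<le> pnorm p x powr (p - 1) * pnorm p y"
proof (cases "x = 0 \<or> y = 0")
  case True
  then show ?thesis by (auto simp: pnorm_nonneg)
next
  case False
  define X where "X = pnorm p x"
  define Y where "Y = pnorm p y"
  have X: "0 < X" and Y: "0 < Y"
    using False p pnorm_pos[of p x] pnorm_pos[of p y] by (auto simp: X_def Y_def)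
  define p' where "p' = p / (p - 1)"
  have p': "1 < p'" "1 / p' + 1 / p = 1" "(p - 1) * p' = p"
    using p by (auto simp: p'_def field_simps)
  have young: "(\<bar>x $ i\<bar> / X) powr (p - 1) * (\<bar>y $ i\<bar> / Y)
      \<le> (\<bar>x $ i\<bar> / X) powr p / p' + (\<bar>y $ i\<bar> / Y) powr p / p" for i
    using Youngs_inequality[of p' p "(\<bar>x $ i\<bar> / X) powr (p - 1)" "\<bar>y $ i\<bar> / Y"] p p' X Y
    by (simp add: powr_powr)
  have "duality_map p x \<bullet> y \<le> (\<Sum>i\<in>UNIV. \<bar>x $ i\<bar> powr (p - 1) * \<bar>y $ i\<bar>)"
    unfolding duality_map_def inner_vec_def
    by (rule sum_mono) (auto simp: signed_powr_def sgn_if abs_mult)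
  also have "\<dots> = X powr (p - 1) * Y
      * (\<Sum>i\<in>UNIV. (\<bar>x $ i\<bar> / X) powr (p - 1) * (\<bar>y $ i\<bar> / Y))"
    using X Y by (simp add: powr_divide sum_distrib_left)
  also have "\<dots> \<le> X powr (p - 1) * Y
      * (\<Sum>i\<in>UNIV. (\<bar>x $ i\<bar> / X) powr p / p' + (\<bar>y $ i\<bar> / Y) powr p / p)"
    using X Y by (intro mult_left_mono sum_mono young) auto
  also have "(\<Sum>i\<in>UNIV. (\<bar>x $ i\<bar> / X) powr p / p' + (\<bar>y $ i\<bar> / Y) powr p / p) = 1"
  proof -
    have "(\<Sum>i\<in>UNIV. \<bar>x $ i\<bar> powr p) = X powr p"
      and "(\<Sum>i\<in>UNIV. \<bar>y $ i\<bar> powr p) = Y powr p"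
      using p by (simp_all add: X_def Y_def pnorm_powr_self sum_abs_powr_def)
    then show ?thesis
      using X Y p' by (simp add: sum.distrib powr_divide sum_divide_distrib[symmetric])
  qed
  finally show ?thesis by (simp add: X_def Y_def)
qed

lemma pnorm_triangle:
  fixes x y :: "real ^ 'd"
  assumes p: "1 < p"
  shows "pnorm p (x + y) \<le> pnorm p x + pnorm p y"
proof (cases "x + y = 0")
  case True
  then show ?thesis by (simp add: pnorm_nonneg add_nonneg_nonneg)
next
  case False
  define R where "R = pnorm p (x + y)"
  have R: "0 < R" using False p pnorm_pos[of p "x + y"] by (simp add: R_def)
  have "R powr (p - 1) * R = R powr p"
    using R by (simp add: powr_diff)
  also have "\<dots> = duality_map p (x + y) \<bullet> x + duality_map p (x + y) \<bullet> y"
    using p by (simp add: R_def inner_duality_map_self flip: inner_add_right)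
  also have "\<dots> \<le> R powr (p - 1) * (pnorm p x + pnorm p y)"
    using inner_duality_map_le[OF p, of "x + y"] by (simp add: R_def distrib_left add_mono)
  finally show ?thesis using R by (simp add: R_def)
qed

lemma inner_duality_map_diff_ge:
  fixes a b :: "real ^ 'd"
  assumes p: "2 \<le> p"
  shows "2 powr (2 - p) * pnorm p (a - b) powr p
    \<le> (duality_map p a - duality_map p b) \<bullet> (a - b)"
proof -
  have "2 powr (2 - p) * pnorm p (a - b) powr p
      = (\<Sum>i\<in>UNIV. 2 powr (2 - p) * \<bar>a $ i - b $ i\<bar> powr p)"
    using p by (simp add: pnorm_powr_self sum_abs_powr_def sum_distrib_left)
  also have "\<dots> \<le> (\<Sum>i\<in>UNIV.
      (signed_powr (p - 1) (a $ i) - signed_powr (p - 1) (b $ i)) * (a $ i - b $ i))"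
    by (intro sum_mono signed_powr_strongly_monotone p)
  also have "\<dots> = (duality_map p a - duality_map p b) \<bullet> (a - b)"
    by (simp add: duality_map_def inner_vec_def)
  finally show ?thesis .
qed

lemma inner_weighted_duality_map_diff_ge_ordered:
  fixes a b :: "real ^ 'd"
  assumes p: "2 \<le> p" and ps: "p \<le> s" and ord: "pnorm p b \<le> pnorm p a"
  shows "2 powr (2 - s) * pnorm p (a - b) powr s
    \<le> (pnorm p a powr (s - p) *\<^sub>R duality_map p a - pnorm p b powr (s - p) *\<^sub>R duality_map p b)
       \<bullet> (a - b)"
proof -
  define A B R where "A = pnorm p a" and "B = pnorm p b" and "R = pnorm p (a - b)"
  have p1: "1 < p" using p by simp
  have "B \<le> A" "0 \<le> B" "0 \<le> R" using ord by (simp_all add: A_def B_def R_def pnorm_nonneg)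
  moreover have "R \<le> A + B"
    using pnorm_triangle[OF p1, of a "- b"] by (simp add: A_def B_def R_def)
  moreover have "0 \<le> duality_map p a \<bullet> (a - b)"
  proof -
    have "duality_map p a \<bullet> b \<le> A powr (p - 1) * B"
      using inner_duality_map_le[OF p1] by (simp add: A_def B_def)
    also have "\<dots> \<le> A powr (p - 1) * A"
      using \<open>B \<le> A\<close> by (intro mult_left_mono) auto
    also have "\<dots> = duality_map p a \<bullet> a"
      using p pnorm_nonneg[of p a] by (cases "A = 0") (auto simp: A_def inner_duality_map_self powr_diff)
    finally show ?thesis by (simp add: inner_diff_right)
  qed
  moreover have "- (duality_map p b \<bullet> (a - b)) \<le> B powr (p - 1) * R"
    using inner_duality_map_le[OF p1, of b "b - a"]
    by (simp add: B_def R_def pnorm_minus_commute[of p b a] inner_diff_right)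
  moreover have "2 powr (2 - p) * R powr p
      \<le> duality_map p a \<bullet> (a - b) - duality_map p b \<bullet> (a - b)"
    using inner_duality_map_diff_ge[OF p, of a b] by (simp add: R_def inner_diff_left)
  ultimately have "2 powr (2 - s) * R powr s
      \<le> A powr (s - p) * (duality_map p a \<bullet> (a - b))
        - B powr (s - p) * (duality_map p b \<bullet> (a - b))"
    by (intro powr_weighted_gap_ge[OF p ps])
  then show ?thesis by (simp add: A_def B_def R_def inner_diff_left)
qed

lemma inner_weighted_duality_map_diff_ge:
  fixes a b :: "real ^ 'd"
  assumes p: "2 \<le> p" and ps: "p \<le> s"
  shows "2 powr (2 - s) * pnorm p (a - b) powr s
    \<le> (pnorm p a powr (s - p) *\<^sub>R duality_map p a - pnorm p b powr (s - p) *\<^sub>R duality_map p b)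
       \<bullet> (a - b)"
proof (cases "pnorm p b \<le> pnorm p a")
  case True
  then show ?thesis by (rule inner_weighted_duality_map_diff_ge_ordered[OF p ps])
next
  case False
  have swap: "(u - v) \<bullet> (a - b) = (v - u) \<bullet> (b - a)" for u v :: "real ^ 'd"
    by (simp add: inner_diff_left inner_diff_right algebra_simps)
  show ?thesis
    using inner_weighted_duality_map_diff_ge_ordered[OF p ps, of a b] False
    by (simp add: swap[of "_ *\<^sub>R _"] pnorm_minus_commute)
qed

lemma has_derivative_sum_abs_powr:
  fixes z :: "real ^ 'd"
  assumes p: "1 < p"
  shows "(sum_abs_powr p has_derivative (\<lambda>v. (p *\<^sub>R duality_map p z) \<bullet> v)) (at z)"
proof -
  have "((\<lambda>z. \<bar>z $ i\<bar> powr p) has_derivative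
      (\<lambda>v. p * signed_powr (p - 1) (z $ i) * v $ i)) (at z)" for i
    using has_derivative_compose[OF bounded_linear_imp_has_derivative[OF bounded_linear_vec_nth]
        has_real_derivative_abs_powr[OF p, of "z $ i", unfolded has_field_derivative_def]]
    by (simp add: mult.commute)
  then have "(sum_abs_powr p has_derivative
      (\<lambda>v. \<Sum>i\<in>UNIV. p * signed_powr (p - 1) (z $ i) * v $ i)) (at z)"
    unfolding sum_abs_powr_def[abs_def] by (rule has_derivative_sum)
  then show ?thesis
    by (rule has_derivative_eq_rhs) (simp add: duality_map_def inner_vec_def mult.assoc)
qed

lemma has_derivative_pnorm_powr:
  fixes z :: "real ^ 'd"
  assumes p: "1 < p" and ps: "p \<le> s"
  shows "((\<lambda>z. pnorm p z powr s) has_derivative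
      (\<lambda>v. ((s * pnorm p z powr (s - p)) *\<^sub>R duality_map p z) \<bullet> v)) (at z)"
  \<comment> \<open>For s > p, h is |t| powr (s / p) composed with sum_abs_powr p; for s = p this fails,
    since |t| is not differentiable at 0.\<close>
proof (cases "s = p")
  case True
  have h_eq: "(\<lambda>z. pnorm p z powr s) = sum_abs_powr p"
    using True p by (simp add: pnorm_powr_self)
  have grad_eq: "(s * pnorm p z powr (s - p)) *\<^sub>R duality_map p z = p *\<^sub>R duality_map p z"
    using True p pnorm_pos[of p z] by (cases "z = 0") auto
  show ?thesis
    unfolding h_eq grad_eq by (rule has_derivative_sum_abs_powr[OF p])
next
  case False
  have r: "1 < s / p" using False p ps by simp
  have h_eq: "(\<lambda>z :: real ^ 'd. pnorm p z powr s)
      = (\<lambda>z. \<bar>sum_abs_powr p z\<bar> powr (s / p))"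
  proof (rule ext)
    fix y :: "real ^ 'd"
    show "pnorm p y powr s = \<bar>sum_abs_powr p y\<bar> powr (s / p)"
      using p sum_abs_powr_nonneg[of p y]
      by (simp add: pnorm_def powr_powr flip: sum_abs_powr_def)
  qed
  have grad_eq: "(s * pnorm p z powr (s - p)) *\<^sub>R duality_map p z
      = (s / p * signed_powr (s / p - 1) (sum_abs_powr p z) * p) *\<^sub>R duality_map p z"
  proof (cases "z = 0")
    case False
    then have "0 < sum_abs_powr p z"
      using p sum_abs_powr_nonneg[of p z] sum_abs_powr_eq_0_iff[of p z] by simp
    then show ?thesis
      using p
      by (simp add: signed_powr_def pnorm_def sum_abs_powr_def powr_powr diff_divide_distrib)
  qed simp
  show ?thesis
    unfolding h_eq grad_eq
    using has_derivative_compose[OF has_derivative_sum_abs_powr[OF p, of z]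
        has_real_derivative_abs_powr[OF r, of "sum_abs_powr p z",
          unfolded has_field_derivative_def]] p
    by (simp add: algebra_simps)
qed

lemma grad_eqI:
  fixes h :: "real ^ 'd \<Rightarrow> real"
  assumes "(h has_derivative (\<lambda>v. g \<bullet> v)) (at z)"
  shows "grad h z = g"
proof -
  have "(h has_derivative (\<lambda>v. grad h z \<bullet> v)) (at z)"
    unfolding grad_def using assms by (rule someI)
  then have "(\<lambda>v. grad h z \<bullet> v) = (\<lambda>v. g \<bullet> v)"
    using assms by (rule has_derivative_unique)
  then have "(grad h z - g) \<bullet> (grad h z - g) = 0"
    by (metis inner_diff_left right_minus_eq)
  then show ?thesis by simp
qed

lemma bregman_add_bregman_swap:
  "bregman h x y + bregman h y x = (grad h x - grad h y) \<bullet> (x - y)"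
  by (simp add: bregman_def inner_diff_left inner_diff_right algebra_simps)

theorem mainTheorem2:
  fixes p s :: real and h :: "real ^ 'd \<Rightarrow> real"
  assumes "2 \<le> p" and "p \<le> s"
    and "\<And>z. h z = pnorm p z powr s"
  shows "\<forall>za zb. bregman h za zb + bregman h zb za
            \<ge> (4 * s / 2 powr s) * pnorm p (za - zb) powr s"
proof (intro allI)
  fix za zb :: "real ^ 'd"
  have "h = (\<lambda>z. pnorm p z powr s)" using assms(3) by auto
  then have grad: "grad h z = (s * pnorm p z powr (s - p)) *\<^sub>R duality_map p z" for z
    using has_derivative_pnorm_powr[of p s z] assms(1,2) by (simp add: grad_eqI)
  have "(4 * s / 2 powr s) * pnorm p (za - zb) powr s
      = s * (2 powr (2 - s) * pnorm p (za - zb) powr s)"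
    by (simp add: powr_diff)
  also have "\<dots> \<le> s * ((pnorm p za powr (s - p) *\<^sub>R duality_map p za
      - pnorm p zb powr (s - p) *\<^sub>R duality_map p zb) \<bullet> (za - zb))"
    using assms(1,2) by (intro mult_left_mono inner_weighted_duality_map_diff_ge) auto
  also have "\<dots> = (grad h za - grad h zb) \<bullet> (za - zb)"
    by (simp add: grad inner_diff_left algebra_simps)
  also have "\<dots> = bregman h za zb + bregman h zb za"
    by (rule bregman_add_bregman_swap[symmetric])
  finally show "bregman h za zb + bregman h zb za \<ge> (4 * s / 2 powr s) * pnorm p (za - zb) powr s" .
qed

end
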